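(* The logic $\mathsf{wPL}$ is locally tabular but not uniformly locally tabular.
   Context: $\mathsf{wPL}=\mathsf{IPC}\oplus (q\to p)\vee\big(((p\to q)\to p)\to p\big)$ (Weak Peirce's Law). A logic $L$ is locally tabular if over each finite set of variables there are finitely many formulas up to $L$-equivalence; it is $n$-uniform if every formula is $L$-equivalent to one of implication depth $\le n$ (atoms/constants depth $0$, $\wedge,\vee$ take maximum, $d(\varphi\to\psi)=\max(d(\varphi),d(\psi))+1$); uniformly locally tabular if $n$-uniform for some $n$. *)

theory Defs
  imports Main
begin

datatype fm = Var nat | Bot | Top | Conj fm fm | Disj fm fm | Imp fm fm

fun vars :: "fm \<Rightarrow> nat set" where
  "vars (Var n) = {n}"
| "vars Bot = {}"
| "vars Top = {}"
| "vars (Conj a b) = vars a \<union> vars b"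
| "vars (Disj a b) = vars a \<union> vars b"
| "vars (Imp a b) = vars a \<union> vars b"

fun idepth :: "fm \<Rightarrow> nat" where
  "idepth (Var n) = 0"
| "idepth Bot = 0"
| "idepth Top = 0"
| "idepth (Conj a b) = max (idepth a) (idepth b)"
| "idepth (Disj a b) = max (idepth a) (idepth b)"
| "idepth (Imp a b) = max (idepth a) (idepth b) + 1"

fun subst :: "(nat \<Rightarrow> fm) \<Rightarrow> fm \<Rightarrow> fm" where
  "subst s (Var n) = s n"
| "subst s Bot = Bot"
| "subst s Top = Top"
| "subst s (Conj a b) = Conj (subst s a) (subst s b)"
| "subst s (Disj a b) = Disj (subst s a) (subst s b)"
| "subst s (Imp a b) = Imp (subst s a) (subst s b)"

text \<open>Since IPC is
  given by axiom schemata, closure under substitution amounts to adding all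
  substitution instances of the extra axioms.\<close>
inductive derivable :: "fm set \<Rightarrow> fm \<Rightarrow> bool" for Ax :: "fm set" where
  ax1: "derivable Ax (Imp A (Imp B A))"
| ax2: "derivable Ax (Imp (Imp A (Imp B C)) (Imp (Imp A B) (Imp A C)))"
| ax3: "derivable Ax (Imp (Conj A B) A)"
| ax4: "derivable Ax (Imp (Conj A B) B)"
| ax5: "derivable Ax (Imp A (Imp B (Conj A B)))"
| ax6: "derivable Ax (Imp A (Disj A B))"
| ax7: "derivable Ax (Imp B (Disj A B))"
| ax8: "derivable Ax (Imp (Imp A C) (Imp (Imp B C) (Imp (Disj A B) C)))"
| ax9: "derivable Ax (Imp Bot A)"
| axTop: "derivable Ax Top"
| extra: "\<phi> \<in> Ax \<Longrightarrow> derivable Ax (subst s \<phi>)"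
| mp: "derivable Ax (Imp A B) \<Longrightarrow> derivable Ax A \<Longrightarrow> derivable Ax B"

definition wPL_axiom :: fm where
  "wPL_axiom = (let p = Var 0; q = Var 1 in
     Disj (Imp q p) (Imp (Imp (Imp p q) p) p))"

definition wPL :: "fm \<Rightarrow> bool" where
  "wPL = derivable {wPL_axiom}"

definition equiv_in :: "(fm \<Rightarrow> bool) \<Rightarrow> fm \<Rightarrow> fm \<Rightarrow> bool" where
  "equiv_in L a b \<longleftrightarrow> L (Imp a b) \<and> L (Imp b a)"

definition locally_tabular :: "(fm \<Rightarrow> bool) \<Rightarrow> bool" where
  "locally_tabular L \<longleftrightarrow>
     (\<forall>V. finite V \<longrightarrow>
        finite ({a. vars a \<subseteq> V} // {(a, b). vars a \<subseteq> V \<and> vars b \<subseteq> V \<and> equiv_in L a b}))"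

definition n_uniform :: "(fm \<Rightarrow> bool) \<Rightarrow> nat \<Rightarrow> bool" where
  "n_uniform L n \<longleftrightarrow> (\<forall>a. \<exists>b. idepth b \<le> n \<and> equiv_in L a b)"

definition uniformly_locally_tabular :: "(fm \<Rightarrow> bool) \<Rightarrow> bool" where
  "uniformly_locally_tabular L \<longleftrightarrow> (\<exists>n. n_uniform L n)"

end

(* In a rooted frame of wPL, being equal or incomparable is an equivalence
   relation whose classes (levels) are linearly ordered; the canonical frame of any extension
   of wPL has this property. Fix a finite set V of atoms and abstract each point y of the cone
   of a prime theory u by its key: the atoms of V true everywhere on the level of y, somewhere
   on it, and at y. Suitably ordered, the keys form a finite frame onto which the cone maps as
   a p-morphism, so the V-formulas in u are determined by the key of u and the set of keys of
   its cone. Hence only finitely many sets of V-formulas occur as prime theories restricted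
   to V, and by completeness there are only finitely many V-formulas up to equivalence.

   On the ladder frame, whose rung l consists of two incomparable
   points (l, True) and (l, False) that see every point of the lower rungs, the formula
   bd n = p_n \<or> (p_n \<rightarrow> bd (n - 1)) separates (n, False) from (n + 1, True), while no
   formula of implication depth at most n does. *)

theory Submission
  imports Defs
begin

section \<open>Derivations from hypotheses and prime theories\<close>

inductive derivable_from :: "fm set \<Rightarrow> fm set \<Rightarrow> fm \<Rightarrow> bool" for Ax G where
  hyp: "a \<in> G \<Longrightarrow> derivable_from Ax G a"
| derived: "derivable Ax a \<Longrightarrow> derivable_from Ax G a"
| modus_ponens: "derivable_from Ax G (Imp a b) \<Longrightarrow> derivable_from Ax G a \<Longrightarrow> derivable_from Ax G b"

lemma derivable_Imp_self: "derivable Ax (Imp a a)"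
  by (meson derivable.ax1 derivable.ax2 derivable.mp)

lemma derivable_from_mono: "derivable_from Ax G a \<Longrightarrow> G \<subseteq> H \<Longrightarrow> derivable_from Ax H a"
  by (induction rule: derivable_from.induct) (auto intro: derivable_from.intros)

lemma derivable_from_empty_iff: "derivable_from Ax {} a \<longleftrightarrow> derivable Ax a"
proof
  show "derivable_from Ax {} a \<Longrightarrow> derivable Ax a"
    by (induction rule: derivable_from.induct) (auto intro: derivable.mp)
qed (rule derivable_from.derived)

lemma derivable_from_deduction:
  "derivable_from Ax (insert a G) b \<Longrightarrow> derivable_from Ax G (Imp a b)"
proof (induction rule: derivable_from.induct)
  case (hyp c)
  then show ?case
    by (metis derivable.ax1 derivable_Imp_self derivable_from.simps insertE)
next
  case (derived c)
  then show ?case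
    by (meson derivable.ax1 derivable_from.derived derivable_from.modus_ponens)
next
  case (modus_ponens c d)
  then show ?case
    by (meson derivable.ax2 derivable_from.derived derivable_from.modus_ponens)
qed

lemma derivable_from_Union_chain:
  assumes "derivable_from Ax (\<Union>C) c" and "C \<noteq> {}" and "chain\<^sub>\<subseteq> C"
  shows "\<exists>G\<in>C. derivable_from Ax G c"
  using assms
proof (induction rule: derivable_from.induct)
  case (modus_ponens a b)
  then obtain G H where "G \<in> C" "H \<in> C" "derivable_from Ax G (Imp a b)" "derivable_from Ax H a"
    by blast
  with \<open>chain\<^sub>\<subseteq> C\<close> show ?case
    unfolding chain_subset_def by (metis derivable_from.modus_ponens derivable_from_mono)
qed (auto intro: derivable_from.intros)

definition prime_theory :: "fm set \<Rightarrow> fm set \<Rightarrow> bool" where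
  "prime_theory Ax G \<longleftrightarrow> (\<forall>a. derivable_from Ax G a \<longrightarrow> a \<in> G) \<and> Bot \<notin> G
     \<and> (\<forall>a b. Disj a b \<in> G \<longrightarrow> a \<in> G \<or> b \<in> G)"

abbreviation prime_theories :: "fm set \<Rightarrow> fm set set" where
  "prime_theories Ax \<equiv> {G. prime_theory Ax G}"

lemma lindenbaum:
  assumes "\<not> derivable_from Ax G c"
  obtains D where "G \<subseteq> D" "prime_theory Ax D" "c \<notin> D"
proof -
  define A where "A = {D. G \<subseteq> D \<and> \<not> derivable_from Ax D c}"
  have "\<exists>M\<in>A. \<forall>X\<in>A. M \<subseteq> X \<longrightarrow> X = M"
  proof (rule subset_Zorn_nonempty)
    fix C assume "C \<noteq> {}" "subset.chain A C"
    then show "\<Union>C \<in> A"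
      using derivable_from_Union_chain[of Ax C c]
      by (auto simp: A_def subset_chain_def chain_subset_def)
  qed (use assms A_def in auto)
  then obtain M where M: "G \<subseteq> M" "\<not> derivable_from Ax M c"
    and maximal: "\<And>X. G \<subseteq> X \<Longrightarrow> \<not> derivable_from Ax X c \<Longrightarrow> M \<subseteq> X \<Longrightarrow> X = M"
    unfolding A_def by auto
  have refutes: "derivable_from Ax M (Imp a c)" if "a \<notin> M" for a
    using maximal[of "insert a M"] M that derivable_from_deduction by blast
  have "prime_theory Ax M"
    unfolding prime_theory_def
  proof (intro conjI allI impI)
    show "a \<in> M" if "derivable_from Ax M a" for a
      using that refutes M(2) derivable_from.modus_ponens by blast
    show "Bot \<notin> M"
      using M(2) by (meson derivable.ax9 derivable_from.intros)
    show "a \<in> M \<or> b \<in> M" if "Disj a b \<in> M" for a b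
      using that refutes M(2)
      by (meson derivable.ax8 derivable_from.intros)
  qed
  moreover have "c \<notin> M"
    using M(2) derivable_from.hyp by blast
  ultimately show thesis
    using that M(1) by blast
qed

context
  fixes Ax G
  assumes G: "prime_theory Ax G"
begin

lemma prime_theory_derivable_from: "derivable_from Ax G a \<Longrightarrow> a \<in> G"
  using G by (simp add: prime_theory_def)

lemma prime_theory_derivable: "derivable Ax a \<Longrightarrow> a \<in> G"
  by (simp add: prime_theory_derivable_from derivable_from.derived)

lemma prime_theory_mp: "Imp a b \<in> G \<Longrightarrow> a \<in> G \<Longrightarrow> b \<in> G"
  by (meson prime_theory_derivable_from derivable_from.hyp derivable_from.modus_ponens)

lemma prime_theory_Top: "Top \<in> G"
  by (simp add: prime_theory_derivable derivable.axTop)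

lemma prime_theory_Bot: "Bot \<notin> G"
  using G by (simp add: prime_theory_def)

lemma prime_theory_Conj: "Conj a b \<in> G \<longleftrightarrow> a \<in> G \<and> b \<in> G"
  by (meson prime_theory_derivable prime_theory_mp derivable.ax3 derivable.ax4 derivable.ax5)

lemma prime_theory_Disj: "Disj a b \<in> G \<longleftrightarrow> a \<in> G \<or> b \<in> G"
  using G by (meson prime_theory_def prime_theory_derivable prime_theory_mp derivable.ax6 derivable.ax7)

end

lemma prime_theory_Imp:
  assumes "prime_theory Ax G"
  shows "Imp a b \<in> G \<longleftrightarrow> (\<forall>H. prime_theory Ax H \<longrightarrow> G \<subseteq> H \<longrightarrow> a \<in> H \<longrightarrow> b \<in> H)"
proof
  assume "\<forall>H. prime_theory Ax H \<longrightarrow> G \<subseteq> H \<longrightarrow> a \<in> H \<longrightarrow> b \<in> H"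
  moreover have "\<not> derivable_from Ax (insert a G) b" if "Imp a b \<notin> G"
    using assms that derivable_from_deduction prime_theory_derivable_from by blast
  ultimately show "Imp a b \<in> G"
    by (metis insert_subset lindenbaum)
qed (use prime_theory_mp in blast)

lemma derivable_Imp_iff_prime_theories:
  "derivable Ax (Imp a b) \<longleftrightarrow> (\<forall>G. prime_theory Ax G \<longrightarrow> a \<in> G \<longrightarrow> b \<in> G)"
proof
  assume "\<forall>G. prime_theory Ax G \<longrightarrow> a \<in> G \<longrightarrow> b \<in> G"
  then have "derivable_from Ax {a} b"
    by (metis insert_subset lindenbaum)
  then show "derivable Ax (Imp a b)"
    using derivable_from_deduction derivable_from_empty_iff by blast
qed (meson prime_theory_derivable prime_theory_mp)

section \<open>Kripke semantics and wPL frames\<close>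

fun forces :: "('w \<Rightarrow> 'w \<Rightarrow> bool) \<Rightarrow> ('w \<Rightarrow> nat \<Rightarrow> bool) \<Rightarrow> 'w \<Rightarrow> fm \<Rightarrow> bool" where
  "forces R V w (Var n) = V w n"
| "forces R V w Bot = False"
| "forces R V w Top = True"
| "forces R V w (Conj a b) = (forces R V w a \<and> forces R V w b)"
| "forces R V w (Disj a b) = (forces R V w a \<or> forces R V w b)"
| "forces R V w (Imp a b) = (\<forall>v. R w v \<longrightarrow> forces R V v a \<longrightarrow> forces R V v b)"

definition persistent :: "('w \<Rightarrow> 'w \<Rightarrow> bool) \<Rightarrow> ('w \<Rightarrow> nat \<Rightarrow> bool) \<Rightarrow> bool" where
  "persistent R V \<longleftrightarrow> (\<forall>w v n. R w v \<longrightarrow> V w n \<longrightarrow> V v n)"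

lemma forces_persistent:
  assumes "transp R" "persistent R V"
  shows "R w v \<Longrightarrow> forces R V w a \<Longrightarrow> forces R V v a"
proof (induction a arbitrary: w v)
  case (Var n)
  then show ?case
    using \<open>persistent R V\<close> by (simp add: persistent_def)
next
  case (Imp a b)
  have "R w u" if "R v u" for u
    using \<open>transp R\<close> Imp.prems(1) that by (rule transpD)
  then show ?case
    using Imp.prems(2) by simp
qed auto

lemma forces_derivable:
  assumes "reflp R" "transp R" "persistent R V"
    and axioms: "\<forall>\<phi>\<in>Ax. \<forall>s w. forces R V w (subst s \<phi>)"
  shows "derivable Ax a \<Longrightarrow> forces R V w a"
proof (induction arbitrary: w rule: derivable.induct)
  case (ax1 A B)
  show ?case
    using forces_persistent[OF assms(2,3)] by auto
next
  case (ax2 A B C)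
  show ?case
    using reflpD[OF \<open>reflp R\<close>] transpD[OF \<open>transp R\<close>] by simp meson
next
  case (ax8 A C B)
  show ?case
    using transpD[OF \<open>transp R\<close>] by simp
next
  case (extra \<phi> s)
  then show ?case
    using axioms by blast
next
  case (mp A B)
  then show ?case
    using mp.IH(1)[of w] mp.IH(2)[of w] reflpD[OF \<open>reflp R\<close>, of w] by simp
qed (use reflpD[OF \<open>reflp R\<close>] forces_persistent[OF assms(2,3)] in auto)

definition wPL_frame :: "'w set \<Rightarrow> ('w \<Rightarrow> 'w \<Rightarrow> bool) \<Rightarrow> bool" where
  "wPL_frame W R \<longleftrightarrow> (\<forall>r\<in>W. \<forall>x\<in>W. \<forall>z\<in>W. \<forall>y\<in>W.
      R r x \<longrightarrow> R r z \<longrightarrow> R z y \<longrightarrow> \<not> R y z \<longrightarrow> \<not> R z x \<longrightarrow> R x y)"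

lemma wPL_frameD:
  "wPL_frame W R \<Longrightarrow> r \<in> W \<Longrightarrow> x \<in> W \<Longrightarrow> z \<in> W \<Longrightarrow> y \<in> W \<Longrightarrow>
    R r x \<Longrightarrow> R r z \<Longrightarrow> R z y \<Longrightarrow> \<not> R y z \<Longrightarrow> \<not> R z x \<Longrightarrow> R x y"
  unfolding wPL_frame_def by blast

definition weak_peirce :: "fm \<Rightarrow> fm \<Rightarrow> fm" where
  "weak_peirce p q = Disj (Imp q p) (Imp (Imp (Imp p q) p) p)"

lemma subst_wPL_axiom: "subst s wPL_axiom = weak_peirce (s 0) (s 1)"
  by (simp add: wPL_axiom_def weak_peirce_def Let_def)

lemma wPL_weak_peirce: "wPL (weak_peirce p q)"
  using derivable.extra[of wPL_axiom "{wPL_axiom}" "\<lambda>n. if n = 0 then p else q"]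
  by (simp add: wPL_def subst_wPL_axiom)

lemma forces_weak_peirce:
  assumes "reflp R" "transp R" "persistent R V" "wPL_frame UNIV R"
  shows "forces R V r (weak_peirce p q)"
proof (rule ccontr)
  note up = forces_persistent[OF assms(2,3)]
  note refl = reflpD[OF \<open>reflp R\<close>]
  assume "\<not> ?thesis"
  then obtain x z where x: "R r x" "forces R V x q" "\<not> forces R V x p"
    and z: "R r z" "forces R V z (Imp (Imp p q) p)" "\<not> forces R V z p"
    by (auto simp: weak_peirce_def)
  have "\<not> forces R V z (Imp p q)"
    using z(2,3) refl[of z] by auto
  then obtain y where y: "R z y" "forces R V y p" "\<not> forces R V y q"
    by auto
  have "\<not> R y z"
    using up[of y z p] y(2) z(3) by blast
  moreover have "\<not> R z x"
  proof
    assume "R z x"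
    have "forces R V x (Imp p q)"
      using up[of x _ q] x(2) by auto
    then show False
      using up[OF \<open>R z x\<close> z(2)] x(3) refl[of x] by auto
  qed
  ultimately have "R x y"
    using wPL_frameD[OF \<open>wPL_frame UNIV R\<close> _ _ _ _ x(1) z(1) y(1)] by blast
  then show False
    using up[OF \<open>R x y\<close> x(2)] y(3) by blast
qed

lemma forces_wPL:
  assumes "reflp R" "transp R" "persistent R V" "wPL_frame UNIV R" "wPL a"
  shows "forces R V w a"
proof -
  have "\<forall>\<phi>\<in>{wPL_axiom}. \<forall>s v. forces R V v (subst s \<phi>)"
    using forces_weak_peirce[OF assms(1-4)] by (simp add: subst_wPL_axiom)
  from forces_derivable[OF assms(1-3) this] show ?thesis
    using \<open>wPL a\<close> unfolding wPL_def .
qed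

section \<open>Local tabularity\<close>

lemma locally_tabular_derivable:
  fixes sig :: "nat set \<Rightarrow> fm set \<Rightarrow> 'k"
  assumes finite_sig: "\<And>V. finite V \<Longrightarrow> finite (sig V ` prime_theories Ax)"
    and sig: "\<And>V G H a. prime_theory Ax G \<Longrightarrow> prime_theory Ax H \<Longrightarrow> sig V G = sig V H \<Longrightarrow>
      vars a \<subseteq> V \<Longrightarrow> a \<in> G \<Longrightarrow> a \<in> H"
  shows "locally_tabular (derivable Ax)"
  unfolding locally_tabular_def
proof (intro allI impI)
  fix V :: "nat set"
  assume "finite V"
  \<comment> \<open>By completeness, a formula over V is determined up to equivalence by the signatures of
    the prime theories containing it.\<close>
  define S where "S a = sig V ` {G \<in> prime_theories Ax. a \<in> G}" for a
  have derivable_iff: "derivable Ax (Imp a b) \<longleftrightarrow> S a \<subseteq> S b" if "vars b \<subseteq> V" for a b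
  proof
    assume "derivable Ax (Imp a b)"
    then have "{G \<in> prime_theories Ax. a \<in> G} \<subseteq> {G \<in> prime_theories Ax. b \<in> G}"
      using derivable_Imp_iff_prime_theories by blast
    then show "S a \<subseteq> S b"
      unfolding S_def by (rule image_mono)
  next
    assume "S a \<subseteq> S b"
    have "b \<in> G" if "prime_theory Ax G" "a \<in> G" for G
    proof -
      have "sig V G \<in> S b"
        using \<open>S a \<subseteq> S b\<close> that unfolding S_def by blast
      then obtain H where "prime_theory Ax H" "b \<in> H" "sig V H = sig V G"
        unfolding S_def by auto
      then show "b \<in> G"
        using sig[of H G V b] \<open>vars b \<subseteq> V\<close> that(1) by simp
    qed
    then show "derivable Ax (Imp a b)"
      unfolding derivable_Imp_iff_prime_theories by blast
  qed
  define A where "A = {a. vars a \<subseteq> V}"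
  define R where "R = {(a, b). vars a \<subseteq> V \<and> vars b \<subseteq> V \<and> equiv_in (derivable Ax) a b}"
  have "A // R \<subseteq> (\<lambda>X. {b \<in> A. S b = X}) ` Pow (sig V ` prime_theories Ax)"
  proof
    fix C
    assume "C \<in> A // R"
    then obtain a where "a \<in> A" "C = R `` {a}"
      by (auto elim: quotientE)
    then have "C = {b \<in> A. S b = S a}"
      using derivable_iff by (auto simp: A_def R_def equiv_in_def)
    moreover have "S a \<in> Pow (sig V ` prime_theories Ax)"
      by (auto simp: S_def)
    ultimately show "C \<in> (\<lambda>X. {b \<in> A. S b = X}) ` Pow (sig V ` prime_theories Ax)"
      by (rule image_eqI)
  qed
  then have "finite (A // R)"
    by (rule finite_surj[rotated]) (use finite_sig[OF \<open>finite V\<close>] in simp)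
  then show "finite ({a. vars a \<subseteq> V} // {(a, b). vars a \<subseteq> V \<and> vars b \<subseteq> V \<and> equiv_in (derivable Ax) a b})"
    unfolding A_def R_def .
qed

definition atoms :: "nat set \<Rightarrow> fm set \<Rightarrow> nat set" where
  "atoms V y = {n \<in> V. Var n \<in> y}"

lemma prime_theories_agree_if_bisimilar:
  assumes atoms: "\<And>G H. Z G H \<Longrightarrow> atoms V G = atoms V H"
    and prime: "\<And>G H. Z G H \<Longrightarrow> prime_theory Ax G \<and> prime_theory Ax H"
    and zig: "\<And>G H G'. Z G H \<Longrightarrow> prime_theory Ax G' \<Longrightarrow> G \<subseteq> G' \<Longrightarrow>
      \<exists>H'. prime_theory Ax H' \<and> H \<subseteq> H' \<and> Z G' H'"
    and zag: "\<And>G H H'. Z G H \<Longrightarrow> prime_theory Ax H' \<Longrightarrow> H \<subseteq> H' \<Longrightarrow>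
      \<exists>G'. prime_theory Ax G' \<and> G \<subseteq> G' \<and> Z G' H'"
  shows "Z G H \<Longrightarrow> vars a \<subseteq> V \<Longrightarrow> a \<in> G \<longleftrightarrow> a \<in> H"
proof (induction a arbitrary: G H)
  case (Var n)
  then show ?case
    using atoms[OF Var(1)] by (auto simp: atoms_def)
next
  case Bot
  then show ?case
    using prime prime_theory_Bot by blast
next
  case (Conj a b)
  have "prime_theory Ax G" "prime_theory Ax H"
    using prime[OF Conj.prems(1)] by simp_all
  then show ?case
    using Conj by (simp add: prime_theory_Conj)
next
  case (Disj a b)
  have "prime_theory Ax G" "prime_theory Ax H"
    using prime[OF Disj.prems(1)] by simp_all
  then show ?case
    using Disj by (simp add: prime_theory_Disj)
next
  case (Imp a b)
  have G: "prime_theory Ax G" and H: "prime_theory Ax H"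
    using prime[OF Imp.prems(1)] by simp_all
  have IH: "a \<in> G' \<longleftrightarrow> a \<in> H'" "b \<in> G' \<longleftrightarrow> b \<in> H'" if "Z G' H'" for G' H'
    using Imp.IH that Imp.prems(2) by simp_all
  show ?case
  proof
    assume "Imp a b \<in> G"
    show "Imp a b \<in> H"
    proof (subst prime_theory_Imp[OF H], intro allI impI)
      fix H' assume "prime_theory Ax H'" "H \<subseteq> H'" "a \<in> H'"
      then obtain G' where "prime_theory Ax G'" "G \<subseteq> G'" "Z G' H'"
        using zag[OF Imp.prems(1)] by blast
      then show "b \<in> H'"
        using IH \<open>a \<in> H'\<close> \<open>Imp a b \<in> G\<close> prime_theory_mp by blast
    qed
  next
    assume "Imp a b \<in> H"
    show "Imp a b \<in> G"
    proof (subst prime_theory_Imp[OF G], intro allI impI)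
      fix G' assume "prime_theory Ax G'" "G \<subseteq> G'" "a \<in> G'"
      then obtain H' where "prime_theory Ax H'" "H \<subseteq> H'" "Z G' H'"
        using zig[OF Imp.prems(1)] by blast
      then show "b \<in> G'"
        using IH \<open>a \<in> G'\<close> \<open>Imp a b \<in> H\<close> prime_theory_mp by blast
    qed
  qed
qed (use prime prime_theory_Top in blast)

lemma prime_theories_wPL_frame:
  assumes weak_peirce: "\<And>p q. derivable Ax (weak_peirce p q)"
  shows "wPL_frame (prime_theories Ax) (\<subseteq>)"
proof (unfold wPL_frame_def, intro ballI impI)
  fix r x z y
  assume "r \<in> prime_theories Ax" "x \<in> prime_theories Ax"
    "z \<in> prime_theories Ax" "y \<in> prime_theories Ax"
  then have prime: "prime_theory Ax r" "prime_theory Ax x" "prime_theory Ax z" "prime_theory Ax y"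
    by simp_all
  assume "r \<subseteq> x" "r \<subseteq> z" "z \<subseteq> y" "\<not> y \<subseteq> z" "\<not> z \<subseteq> x"
  show "x \<subseteq> y"
  proof (rule ccontr)
    assume "\<not> x \<subseteq> y"
    then obtain d where d: "d \<in> x" "d \<notin> y"
      by auto
    obtain b where b: "b \<in> z" "b \<notin> x"
      using \<open>\<not> z \<subseteq> x\<close> by auto
    obtain c where c: "c \<in> y" "c \<notin> z"
      using \<open>\<not> y \<subseteq> z\<close> by auto
    \<comment> \<open>p fails at x and at z although (p \<rightarrow> d) \<rightarrow> p holds at z, so neither disjunct
      of weak Peirce for p and d can hold at r.\<close>
    define p where "p = Conj b (Disj c (Imp c d))"
    have "p \<notin> x"
      using b prime(2) by (simp add: p_def prime_theory_Conj)
    have "p \<notin> z"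
      using c d \<open>z \<subseteq> y\<close> prime(3,4) prime_theory_mp
      by (auto simp: p_def prime_theory_Conj prime_theory_Disj)
    have "Imp (Imp p d) p \<in> z"
    proof (subst prime_theory_Imp[OF prime(3)], intro allI impI)
      fix H assume H: "prime_theory Ax H" "z \<subseteq> H" "Imp p d \<in> H"
      have "Imp c d \<in> H"
      proof (subst prime_theory_Imp[OF H(1)], intro allI impI)
        fix H' assume H': "prime_theory Ax H'" "H \<subseteq> H'" "c \<in> H'"
        then have "p \<in> H'"
          using H b by (auto simp: p_def prime_theory_Conj prime_theory_Disj)
        then show "d \<in> H'"
          using H H' prime_theory_mp by blast
      qed
      then show "p \<in> H"
        using H b by (auto simp: p_def prime_theory_Conj prime_theory_Disj)
    qed
    have "Imp d p \<in> r \<or> Imp (Imp (Imp p d) p) p \<in> r"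
      using prime_theory_derivable[OF prime(1) weak_peirce] prime_theory_Disj[OF prime(1)]
      by (simp add: weak_peirce_def)
    then show False
    proof
      assume "Imp d p \<in> r"
      then show False
        using \<open>r \<subseteq> x\<close> d \<open>p \<notin> x\<close> prime(2) prime_theory_mp by blast
    next
      assume "Imp (Imp (Imp p d) p) p \<in> r"
      then show False
        using \<open>r \<subseteq> z\<close> \<open>Imp (Imp p d) p \<in> z\<close> \<open>p \<notin> z\<close> prime(3) prime_theory_mp by blast
    qed
  qed
qed

definition cone :: "'a set set \<Rightarrow> 'a set \<Rightarrow> 'a set set" where
  "cone W u = {y \<in> W. u \<subseteq> y}"

definition level :: "'a set set \<Rightarrow> 'a set \<Rightarrow> 'a set \<Rightarrow> 'a set set" where
  "level W u y = {y' \<in> cone W u. y' = y \<or> (\<not> y \<subseteq> y' \<and> \<not> y' \<subseteq> y)}"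

lemma self_in_level: "y \<in> cone W u \<Longrightarrow> y \<in> level W u y"
  by (simp add: level_def)

context
  fixes W :: "'a set set" and u :: "'a set"
  assumes frame: "wPL_frame W (\<subseteq>)" and root: "u \<in> W"
begin

lemma level_below_level:
  assumes y: "y \<in> cone W u" and v: "v \<in> cone W u" and "y \<subset> v"
    and y': "y' \<in> level W u y" and v': "v' \<in> level W u v"
  shows "y' \<subseteq> v'"
proof -
  have in_W: "y \<in> W" "v \<in> W" "y' \<in> W" "v' \<in> W" "u \<subseteq> y" "u \<subseteq> v" "u \<subseteq> y'" "u \<subseteq> v'"
    using y v y' v' by (auto simp: cone_def level_def)
  note wPL = wPL_frameD[OF frame root]
  have "y' \<subseteq> v"
    using y' \<open>y \<subset> v\<close> wPL[of y' y v] in_W by (auto simp: level_def)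
  moreover have "y' \<noteq> v"
    using y' \<open>y \<subset> v\<close> by (auto simp: level_def)
  ultimately show ?thesis
    using v' wPL[of v' y' v] in_W by (auto simp: level_def)
qed

lemma level_eq_level:
  assumes y: "y \<in> cone W u" and v: "v \<in> cone W u" and "\<not> y \<subseteq> v" "\<not> v \<subseteq> y"
  shows "level W u y = level W u v"
proof -
  have "level W u a \<subseteq> level W u b"
    if "a \<in> cone W u" "b \<in> cone W u" "\<not> a \<subseteq> b" "\<not> b \<subseteq> a" for a b
  proof
    fix a' assume a': "a' \<in> level W u a"
    have in_W: "a \<in> W" "b \<in> W" "a' \<in> W" "u \<subseteq> a" "u \<subseteq> b" "u \<subseteq> a'"
      using that a' by (auto simp: cone_def level_def)
    note wPL = wPL_frameD[OF frame root]
    show "a' \<in> level W u b"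
      using a' that wPL[of a a' b] wPL[of a b a'] in_W by (auto simp: level_def)
  qed
  then show ?thesis
    using assms by blast
qed

end

definition level_meet :: "nat set \<Rightarrow> fm set set \<Rightarrow> fm set \<Rightarrow> fm set \<Rightarrow> nat set" where
  "level_meet V W u y = {n \<in> V. \<forall>y'\<in>level W u y. Var n \<in> y'}"

definition level_join :: "nat set \<Rightarrow> fm set set \<Rightarrow> fm set \<Rightarrow> fm set \<Rightarrow> nat set" where
  "level_join V W u y = {n \<in> V. \<exists>y'\<in>level W u y. Var n \<in> y'}"

definition key :: "nat set \<Rightarrow> fm set set \<Rightarrow> fm set \<Rightarrow> fm set \<Rightarrow> nat set \<times> nat set \<times> nat set" where
  "key V W u y = (level_meet V W u y, level_join V W u y, atoms V y)"

text \<open>Distinct keys with the same level part can only come from incomparable points.\<close>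

fun key_le :: "nat set \<times> nat set \<times> nat set \<Rightarrow> nat set \<times> nat set \<times> nat set \<Rightarrow> bool" where
  "key_le (lo, hi, at) (lo', hi', at') \<longleftrightarrow>
     (lo, hi, at) = (lo', hi', at') \<or> (lo, hi) \<noteq> (lo', hi') \<and> hi \<subseteq> lo'"

lemma key_le_refl: "key_le k k"
  by (cases k) auto

lemma key_in_Pow: "key V W u y \<in> Pow V \<times> Pow V \<times> Pow V"
  by (auto simp: key_def level_meet_def level_join_def atoms_def)

lemma level_meet_subset_atoms: "y \<in> cone W u \<Longrightarrow> level_meet V W u y \<subseteq> atoms V y"
  using self_in_level by (fastforce simp: level_meet_def atoms_def)

lemma atoms_subset_level_join: "y \<in> cone W u \<Longrightarrow> atoms V y \<subseteq> level_join V W u y"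
  using self_in_level by (fastforce simp: level_join_def atoms_def)

context
  fixes W :: "fm set set" and u :: "fm set"
  assumes frame: "wPL_frame W (\<subseteq>)" and root: "u \<in> W"
begin

lemma level_join_subset_level_meet:
  "y \<in> cone W u \<Longrightarrow> v \<in> cone W u \<Longrightarrow> y \<subset> v \<Longrightarrow> level_join V W u y \<subseteq> level_meet V W u v"
  using level_below_level[OF frame root] by (fastforce simp: level_join_def level_meet_def)

lemma key_le_of_subset:
  assumes y: "y \<in> cone W u" and v: "v \<in> cone W u" and "y \<subseteq> v"
  shows "key_le (key V W u y) (key V W u v)"
proof (cases "y = v")
  case False
  then have "level_join V W u y \<subseteq> level_meet V W u v"
    using level_join_subset_level_meet[OF y v] \<open>y \<subseteq> v\<close> by blast
  moreover have "atoms V y = atoms V v"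
    if "level_meet V W u y = level_meet V W u v" "level_join V W u y = level_join V W u v"
    using that calculation level_meet_subset_atoms[OF y] atoms_subset_level_join[OF y]
      level_meet_subset_atoms[OF v] atoms_subset_level_join[OF v]
    by blast
  ultimately show ?thesis
    by (auto simp: key_def)
qed (simp add: key_le_refl)

lemma ex_subset_of_key_le:
  assumes y: "y \<in> cone W u" and v: "v \<in> cone W u" and le: "key_le (key V W u y) (key V W u v)"
  shows "\<exists>v'\<in>cone W u. y \<subseteq> v' \<and> key V W u v' = key V W u v"
proof (cases "key V W u y = key V W u v \<or> y \<subseteq> v")
  case True
  then show ?thesis
    using y v by blast
next
  case False
  then have level_keys:
      "(level_meet V W u y, level_join V W u y) \<noteq> (level_meet V W u v, level_join V W u v)"
    and join_meet: "level_join V W u y \<subseteq> level_meet V W u v" and "\<not> y \<subseteq> v"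
    using le by (auto simp: key_def)
  show ?thesis
  proof (cases "v \<subseteq> y")
    case True
    then have "level_join V W u v \<subseteq> level_meet V W u y"
      using level_join_subset_level_meet[OF v y] \<open>\<not> y \<subseteq> v\<close> by blast
    then have "level_meet V W u y = level_meet V W u v" "level_join V W u y = level_join V W u v"
      using join_meet
        level_meet_subset_atoms[where V = V, OF y] atoms_subset_level_join[where V = V, OF y]
        level_meet_subset_atoms[where V = V, OF v] atoms_subset_level_join[where V = V, OF v]
      by order+
    then show ?thesis
      using level_keys by simp
  next
    case False
    then have "level W u y = level W u v"
      using level_eq_level[OF frame root y v] \<open>\<not> y \<subseteq> v\<close> by blast
    then show ?thesis
      using level_keys by (simp add: level_meet_def level_join_def)
  qed
qed

end

lemma ex_extension_with_key:
  assumes frame: "wPL_frame W (\<subseteq>)" and u1: "u1 \<in> W" and u2: "u2 \<in> W"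
    and same_keys: "key V W u1 ` cone W u1 = key V W u2 ` cone W u2"
    and y1: "y1 \<in> cone W u1" and y2: "y2 \<in> cone W u2" and "key V W u1 y1 = key V W u2 y2"
    and h1: "h1 \<in> cone W u1" and "y1 \<subseteq> h1"
  shows "\<exists>h2\<in>cone W u2. y2 \<subseteq> h2 \<and> key V W u2 h2 = key V W u1 h1"
proof -
  obtain h where h: "h \<in> cone W u2" "key V W u2 h = key V W u1 h1"
    using same_keys h1 by (metis imageE imageI)
  have "key_le (key V W u2 y2) (key V W u2 h)"
    using key_le_of_subset[where V = V, OF frame u1 y1 h1 \<open>y1 \<subseteq> h1\<close>] h(2)
      \<open>key V W u1 y1 = key V W u2 y2\<close>
    by simp
  then show ?thesis
    using ex_subset_of_key_le[where V = V, OF frame u2 y2 h(1)] h(2) by simp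
qed

definition signature ::
    "nat set \<Rightarrow> fm set set \<Rightarrow> fm set \<Rightarrow> (nat set \<times> nat set \<times> nat set) \<times> (nat set \<times> nat set \<times> nat set) set"
  where "signature V W u = (key V W u u, key V W u ` cone W u)"

lemma finite_range_signature:
  assumes "finite V"
  shows "finite (range (signature V W))"
proof -
  define K where "K = Pow V \<times> Pow V \<times> Pow V"
  have "key V W u ` cone W u \<subseteq> K" for u
    using key_in_Pow unfolding K_def by blast
  then have "range (signature V W) \<subseteq> K \<times> Pow K"
    unfolding signature_def by (intro image_subsetI SigmaI PowI) (simp_all add: K_def key_in_Pow)
  moreover have "finite (K \<times> Pow K)"
    using \<open>finite V\<close> by (simp add: K_def)
  ultimately show ?thesis
    by (rule finite_subset)
qed

lemma prime_theories_agree_if_same_signature: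
  assumes frame: "wPL_frame (prime_theories Ax) (\<subseteq>)"
    and G: "prime_theory Ax G" and H: "prime_theory Ax H"
    and same_signature: "signature V (prime_theories Ax) G = signature V (prime_theories Ax) H"
    and "vars a \<subseteq> V"
  shows "a \<in> G \<longleftrightarrow> a \<in> H"
proof -
  let ?W = "prime_theories Ax"
  have same_key: "key V ?W G G = key V ?W H H"
    and same_keys: "key V ?W G ` cone ?W G = key V ?W H ` cone ?W H"
    using same_signature by (simp_all add: signature_def)
  define Z where "Z G' H' \<longleftrightarrow> G' \<in> cone ?W G \<and> H' \<in> cone ?W H \<and> key V ?W G G' = key V ?W H H'"
    for G' H'
  have G_W: "G \<in> ?W" and H_W: "H \<in> ?W"
    using G H by simp_all
  show ?thesis
  proof (rule prime_theories_agree_if_bisimilar[of Z V Ax])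
    show "atoms V G' = atoms V H'" if "Z G' H'" for G' H'
      using that by (simp add: Z_def key_def)
    show "prime_theory Ax G' \<and> prime_theory Ax H'" if "Z G' H'" for G' H'
      using that by (simp add: Z_def cone_def)
    show "\<exists>H'. prime_theory Ax H' \<and> H0 \<subseteq> H' \<and> Z G' H'"
      if "Z G0 H0" "prime_theory Ax G'" "G0 \<subseteq> G'" for G0 H0 G'
    proof -
      have "G' \<in> cone ?W G"
        using that by (auto simp: Z_def cone_def)
      with that obtain H' where "H' \<in> cone ?W H" "H0 \<subseteq> H'" "key V ?W H H' = key V ?W G G'"
        using ex_extension_with_key[OF frame G_W H_W same_keys, of G0 H0 G']
        by (auto simp: Z_def)
      with \<open>G' \<in> cone ?W G\<close> show ?thesis
        by (auto simp: Z_def cone_def)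
    qed
    show "\<exists>G'. prime_theory Ax G' \<and> G0 \<subseteq> G' \<and> Z G' H'"
      if "Z G0 H0" "prime_theory Ax H'" "H0 \<subseteq> H'" for G0 H0 H'
    proof -
      have "H' \<in> cone ?W H"
        using that by (auto simp: Z_def cone_def)
      with that obtain G' where "G' \<in> cone ?W G" "G0 \<subseteq> G'" "key V ?W G G' = key V ?W H H'"
        using ex_extension_with_key[OF frame H_W G_W same_keys[symmetric], of H0 G0 H']
        by (auto simp: Z_def)
      with \<open>H' \<in> cone ?W H\<close> show ?thesis
        by (auto simp: Z_def cone_def)
    qed
    show "Z G H"
      using G H same_key by (simp add: Z_def cone_def)
  qed fact
qed

lemma locally_tabular_if_weak_peirce:
  assumes "\<And>p q. derivable Ax (weak_peirce p q)"
  shows "locally_tabular (derivable Ax)"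
proof (rule locally_tabular_derivable[of "\<lambda>V. signature V (prime_theories Ax)"])
  show "finite (signature V (prime_theories Ax) ` prime_theories Ax)" if "finite V" for V
    using finite_range_signature[OF that] by (rule finite_subset[rotated]) blast
  show "a \<in> H"
    if "prime_theory Ax G" "prime_theory Ax H"
      "signature V (prime_theories Ax) G = signature V (prime_theories Ax) H" "vars a \<subseteq> V" "a \<in> G"
    for V G H a
    using prime_theories_agree_if_same_signature[OF prime_theories_wPL_frame[OF assms]] that by blast
qed

section \<open>Failure of uniform local tabularity\<close>

definition ladder :: "nat \<times> bool \<Rightarrow> nat \<times> bool \<Rightarrow> bool" where
  "ladder x y \<longleftrightarrow> x = y \<or> fst y < fst x"

definition ladder_val :: "nat \<times> bool \<Rightarrow> nat \<Rightarrow> bool" where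
  "ladder_val x n \<longleftrightarrow> fst x < n \<or> x = (n, True)"

lemma ladder_forces_wPL: "wPL a \<Longrightarrow> forces ladder ladder_val w a"
proof (rule forces_wPL)
  show "reflp ladder"
    by (simp add: reflp_def ladder_def)
  show "transp ladder"
    by (auto simp: transp_def ladder_def)
  show "persistent ladder ladder_val"
    by (auto simp: persistent_def ladder_def ladder_val_def)
  show "wPL_frame UNIV ladder"
    by (auto simp: wPL_frame_def ladder_def)
qed

fun bd :: "nat \<Rightarrow> fm" where
  "bd 0 = Disj (Var 0) (Imp (Var 0) Bot)"
| "bd (Suc n) = Disj (Var (Suc n)) (Imp (Var (Suc n)) (bd n))"

lemma ladder_forces_bd: "forces ladder ladder_val w (bd n) \<longleftrightarrow> fst w \<le> n"
proof (induction n arbitrary: w)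
  case 0
  have imp: "forces ladder ladder_val w (Imp (Var 0) Bot) \<longleftrightarrow> \<not> ladder w (0, True)"
    by (auto simp: ladder_val_def)
  show ?case
    unfolding bd.simps forces.simps(1,5) imp by (auto simp: ladder_def ladder_val_def)
next
  case (Suc n)
  have "forces ladder ladder_val w (Imp (Var (Suc n)) (bd n))
      \<longleftrightarrow> (\<forall>v. ladder w v \<longrightarrow> ladder_val v (Suc n) \<longrightarrow> fst v \<le> n)" (is "?imp \<longleftrightarrow> _")
    by (simp add: Suc.IH)
  also have "\<dots> \<longleftrightarrow> \<not> ladder w (Suc n, True)"
    by (auto simp: ladder_val_def)
  finally have imp: "?imp \<longleftrightarrow> \<not> ladder w (Suc n, True)" .
  show ?case
    unfolding bd.simps forces.simps(1,5) imp by (auto simp: ladder_def ladder_val_def)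
qed

lemma ladder_forces_shallow:
  "idepth a \<le> l \<Longrightarrow>
    forces ladder ladder_val (l, False) a \<longleftrightarrow> forces ladder ladder_val (Suc l, True) a"
proof (induction a arbitrary: l)
  case (Imp a b)
  \<comment> \<open>Besides the successors of (l, False), the point (Suc l, True) sees only itself and
    (l, True); by induction they agree on a and b with (l, False) and (l - 1, False).\<close>
  then obtain l' where l: "l = Suc l'" and depth: "idepth a \<le> l'" "idepth b \<le> l'"
    by (cases l) auto
  have successors:
    "ladder (Suc l, True) v \<longleftrightarrow> v = (Suc l, True) \<or> v = (l, True) \<or> ladder (l, False) v" for v
    by (cases v) (auto simp: ladder_def)
  have "ladder (l, False) (l', False)"
    using l by (simp add: ladder_def)
  then show ?case
    using successors Imp.IH[of l] Imp.IH[of l'] Imp.prems depth l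
    by (auto simp: ladder_def)
qed (auto simp: ladder_val_def)

lemma not_uniformly_locally_tabular_wPL: "\<not> uniformly_locally_tabular wPL"
proof
  assume "uniformly_locally_tabular wPL"
  then obtain n where "n_uniform wPL n"
    unfolding uniformly_locally_tabular_def ..
  then obtain b where b: "idepth b \<le> n" "wPL (Imp (bd n) b)" "wPL (Imp b (bd n))"
    unfolding n_uniform_def equiv_in_def by blast
  have "forces ladder ladder_val (n, False) b"
    using ladder_forces_wPL[OF b(2), of "(n, False)"] ladder_forces_bd[of "(n, False)" n]
    by (auto simp: ladder_def)
  then have "forces ladder ladder_val (Suc n, True) (bd n)"
    using ladder_forces_shallow[OF b(1)] ladder_forces_wPL[OF b(3), of "(Suc n, True)"]
    by (auto simp: ladder_def)
  then show False
    by (simp add: ladder_forces_bd)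
qed

theorem mainTheorem13:
  shows "locally_tabular wPL \<and> \<not> uniformly_locally_tabular wPL"
proof
  show "locally_tabular wPL"
    unfolding wPL_def
    by (rule locally_tabular_if_weak_peirce) (rule wPL_weak_peirce[unfolded wPL_def])
  show "\<not> uniformly_locally_tabular wPL"
    by (rule not_uniformly_locally_tabular_wPL)
qed

end
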